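(* Let $f:\mathbb{R}^n\to\mathbb{R}$ be continuously differentiable, let $s$ be an integer with $0<s<n$, and let $L>0$. Then $\mathbf{x}^*\in\mathbb{R}^n$ satisfies $\mathbf{x}^*\in C_s$ and $\mathbf{x}^*\in P_{C_s}\!\left(\mathbf{x}^*-\frac{1}{L}\nabla f(\mathbf{x}^* )\right)$ if and only if $\|\mathbf{x}^*\|_0\le s$ and $$|\nabla_i f(\mathbf{x}^* )|\ \begin{cases}\le L\,M_s(\mathbf{x}^* ) & \text{if } i\in I_0(\mathbf{x}^* ),\\ =0 & \text{if } i\in I_1(\mathbf{x}^* ).\end{cases}$$
   Context: $\|\mathbf{x}\|_0$ is the number of nonzero components of $\mathbf{x}$ and $C_s=\{\mathbf{x}:\|\mathbf{x}\|_0\le s\}$. $I_1(\mathbf{x})=\{i:x_i\neq0\}$ and $I_0(\mathbf{x})=\{i:x_i=0\}$. $M_i(\mathbf{x})$ denotes the $i$-th largest absolute value among the components of $\mathbf{x}$ (so $M_1(\mathbf{x})\ge\dots\ge M_n(\mathbf{x})$). For a closed set $D$, $P_D(\mathbf{y})=\operatorname{argmin}_{\mathbf{x}\in D}\|\mathbf{x}-\mathbf{y}\|^2$ is the (possibly multi-valued) set of orthogonal projections of $\mathbf{y}$ onto $D$; in particular $P_{C_s}(\mathbf{y})$ is the set of vectors obtained by keeping $s$ components of $\mathbf{y}$ of largest absolute value and setting the rest to zero. *)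

theory Defs
  imports "HOL-Analysis.Analysis" "HOL-Library.Multiset"
begin

definition l0norm :: "real ^ 'n \<Rightarrow> nat" where
  "l0norm x = card {i. x $ i \<noteq> 0}"

definition sparse_set :: "nat \<Rightarrow> (real ^ 'n) set" where
  "sparse_set s = {x. l0norm x \<le> s}"

definition I1 :: "real ^ 'n \<Rightarrow> 'n set" where
  "I1 x = {i. x $ i \<noteq> 0}"

definition I0 :: "real ^ 'n \<Rightarrow> 'n set" where
  "I0 x = {i. x $ i = 0}"

text \<open>M k x: the k-th largest absolute value among the components of x (k = 1..n).\<close>
definition Mlarg :: "nat \<Rightarrow> real ^ 'n \<Rightarrow> real" where
  "Mlarg k x = rev (sorted_list_of_multiset (image_mset (\<lambda>i. \<bar>x $ i\<bar>) (mset_set (UNIV :: 'n set)))) ! (k - 1)"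

definition proj :: "(real ^ 'n) set \<Rightarrow> real ^ 'n \<Rightarrow> (real ^ 'n) set" where
  "proj D y = {x \<in> D. \<forall>z \<in> D. (norm (x - y))\<^sup>2 \<le> (norm (z - y))\<^sup>2}"

end

theory Submission imports Defs begin

text \<open>
  The theorem is a statement about projections onto \<open>C\<^sub>s\<close> alone: \<open>x\<close> is a projection of \<open>y = x - \<nabla>f(x)/L\<close> iff \<open>y\<close> agrees with \<open>x\<close> on the
  support of \<open>x\<close> and \<open>|y\<^sub>i| \<le> M\<^sub>s(x)\<close> off it. Necessity follows by comparing \<open>x\<close> with
  one- or two-coordinate modifications of \<open>x\<close>. For sufficiency, a vector with support \<open>T\<close>
  is at squared distance at least \<open>\<Sum>\<^sub>k\<^sub>\<notin>\<^sub>T y\<^sub>k\<^sup>2\<close> from \<open>y\<close>, with equality for \<open>x\<close>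
  and \<open>T = supp x\<close>; and if \<open>M\<^sub>s(x) > 0\<close> then \<open>|supp x| = s\<close>, \<open>y\<^sub>k\<^sup>2 \<ge> M\<^sub>s(x)\<^sup>2\<close> on the
  support and \<open>y\<^sub>k\<^sup>2 \<le> M\<^sub>s(x)\<^sup>2\<close> off it, so trading support indices can only increase the sum.
\<close>

lemma sorted_desc_length_filter_gt_nth:
  fixes xs :: "'a :: linorder list"
  assumes "sorted_wrt (\<ge>) xs" and "k < length xs"
  shows "length (filter (\<lambda>v. xs ! k < v) xs) \<le> k"
proof -
  have "{j. j < length xs \<and> xs ! k < xs ! j} \<subseteq> {..<k}"
  proof safe
    fix j assume "j < length xs" "xs ! k < xs ! j"
    with assms show "j < k"
      by (metis leI order.strict_iff_not sorted_wrt_iff_nth_less sorted_wrt_nth_less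
          nat_less_le)
  qed
  then show ?thesis
    by (metis card_lessThan card_mono finite_lessThan length_filter_conv_card)
qed

lemma sorted_desc_length_filter_ge_nth:
  fixes xs :: "'a :: linorder list"
  assumes "sorted_wrt (\<ge>) xs" and "k < length xs"
  shows "Suc k \<le> length (filter (\<lambda>v. xs ! k \<le> v) xs)"
proof -
  have "{..<Suc k} \<subseteq> {j. j < length xs \<and> xs ! k \<le> xs ! j}"
  proof safe
    fix j assume "j < Suc k"
    with assms(2) show "j < length xs" "xs ! k \<le> xs ! j"
      using sorted_wrt_nth_less[OF assms(1), of j k] by (auto simp: less_Suc_eq)
  qed
  then show ?thesis
    by (metis card_lessThan card_mono finite_Collect_conjI finite_Collect_less_nat
        length_filter_conv_card)
qed

lemma Mlarg_sorted_list:
  fixes x :: "real ^ 'n"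
  obtains ys where "Mlarg k x = ys ! (k - 1)" and "sorted_wrt (\<ge>) ys"
    and "length ys = CARD('n)" and "\<And>P. length (filter P ys) = card {i. P \<bar>x $ i\<bar>}"
proof
  let ?ms = "image_mset (\<lambda>i. \<bar>x $ i\<bar>) (mset_set (UNIV :: 'n set))"
  let ?ys = "rev (sorted_list_of_multiset ?ms)"
  show "Mlarg k x = ?ys ! (k - 1)" by (simp add: Mlarg_def)
  show "sorted_wrt (\<ge>) ?ys" by (simp add: sorted_wrt_rev)
  have mset_ys: "mset ?ys = ?ms" by simp
  then show "length ?ys = CARD('n)" by (metis size_mset size_image_mset size_mset_set)
  show "length (filter P ?ys) = card {i. P \<bar>x $ i\<bar>}" for P
  proof -
    have "length (filter P ?ys) = size (filter_mset P (mset ?ys))"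
      by (metis mset_filter size_mset)
    then show ?thesis by (simp add: filter_mset_image_mset)
  qed
qed

lemma Mlarg_attained:
  fixes x :: "real ^ 'n"
  assumes "0 < k" and "k \<le> CARD('n)"
  obtains j where "Mlarg k x = \<bar>x $ j\<bar>"
proof -
  obtain ys where ys: "Mlarg k x = ys ! (k - 1)" "length ys = CARD('n)"
    and count: "\<And>P. length (filter P ys) = card {i. P \<bar>x $ i\<bar>}"
    by (metis Mlarg_sorted_list)
  have "ys ! (k - 1) \<in> set ys" using assms ys by simp
  then have "card {i. \<bar>x $ i\<bar> = Mlarg k x} \<noteq> 0"
    by (metis (mono_tags) count[of "\<lambda>v. v = Mlarg k x"] ys(1) filter_empty_conv length_0_conv)
  then show thesis using that by (metis (mono_tags, lifting) card.empty empty_Collect_eq)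
qed

lemma Mlarg_nonneg: "0 < k \<Longrightarrow> k \<le> CARD('n) \<Longrightarrow> 0 \<le> Mlarg k (x :: real ^ 'n)"
  by (metis Mlarg_attained abs_ge_zero)

lemma card_abs_gt_Mlarg:
  fixes x :: "real ^ 'n"
  assumes "0 < k" and "k \<le> CARD('n)"
  shows "card {i. Mlarg k x < \<bar>x $ i\<bar>} < k"
proof -
  obtain ys where "Mlarg k x = ys ! (k - 1)" "sorted_wrt (\<ge>) ys" "length ys = CARD('n)"
    and "\<And>P. length (filter P ys) = card {i. P \<bar>x $ i\<bar>}"
    by (metis Mlarg_sorted_list)
  with assms sorted_desc_length_filter_gt_nth[of ys "k - 1"]
  have "card {i. Mlarg k x < \<bar>x $ i\<bar>} \<le> k - 1" by simp
  with assms(1) show ?thesis by linarith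
qed

lemma card_abs_ge_Mlarg:
  fixes x :: "real ^ 'n"
  assumes "0 < k" and "k \<le> CARD('n)"
  shows "k \<le> card {i. Mlarg k x \<le> \<bar>x $ i\<bar>}"
proof -
  obtain ys where "Mlarg k x = ys ! (k - 1)" "sorted_wrt (\<ge>) ys" "length ys = CARD('n)"
    and "\<And>P. length (filter P ys) = card {i. P \<bar>x $ i\<bar>}"
    by (metis Mlarg_sorted_list)
  with assms sorted_desc_length_filter_ge_nth[of ys "k - 1"] show ?thesis by simp
qed

lemma l0norm_eq_card_I1: "l0norm x = card (I1 x)"
  by (simp add: l0norm_def I1_def)

lemma l0norm_mono: "I1 z \<subseteq> I1 x \<Longrightarrow> l0norm z \<le> l0norm x"
  by (simp add: l0norm_eq_card_I1 card_mono)

lemma card_I1_lt_if_Mlarg_zero: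
  fixes x :: "real ^ 'n"
  assumes "0 < k" and "k \<le> CARD('n)" and "Mlarg k x = 0"
  shows "card (I1 x) < k"
  using card_abs_gt_Mlarg[OF assms(1,2), of x] assms(3) by (simp add: I1_def)

lemma I1_eq_Mlarg_superlevel:
  fixes x :: "real ^ 'n"
  assumes "0 < k" and "k \<le> CARD('n)" and "l0norm x \<le> k" and "0 < Mlarg k x"
  shows "I1 x = {i. Mlarg k x \<le> \<bar>x $ i\<bar>}" and "card (I1 x) = k"
proof -
  have sub: "{i. Mlarg k x \<le> \<bar>x $ i\<bar>} \<subseteq> I1 x"
    using assms(4) by (auto simp: I1_def)
  moreover have "card (I1 x) \<le> card {i. Mlarg k x \<le> \<bar>x $ i\<bar>}"
    using card_abs_ge_Mlarg[OF assms(1,2), of x] assms(3) by (simp add: l0norm_eq_card_I1)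
  ultimately show "I1 x = {i. Mlarg k x \<le> \<bar>x $ i\<bar>}"
    by (metis card_seteq finite)
  then show "card (I1 x) = k"
    using card_abs_ge_Mlarg[OF assms(1,2), of x] assms(3) by (simp add: l0norm_eq_card_I1)
qed

definition vec_upd :: "'a ^ 'n \<Rightarrow> 'n \<Rightarrow> 'a \<Rightarrow> 'a ^ 'n" where
  "vec_upd v i a = (\<chi> k. if k = i then a else v $ k)"

lemma vec_upd_nth [simp]: "vec_upd v i a $ k = (if k = i then a else v $ k)"
  by (simp add: vec_upd_def)

lemma norm_sq_eq_sum: "(norm (w :: real ^ 'n))\<^sup>2 = (\<Sum>k\<in>UNIV. (w $ k)\<^sup>2)"
  unfolding power2_norm_eq_inner by (simp add: inner_vec_def power2_eq_square)

lemma norm_sq_vec_upd_diff: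
  fixes v y :: "real ^ 'n"
  shows "(norm (vec_upd v i a - y))\<^sup>2 = (norm (v - y))\<^sup>2 - (v $ i - y $ i)\<^sup>2 + (a - y $ i)\<^sup>2"
proof -
  have "(\<Sum>k\<in>UNIV. (vec_upd v i a $ k - y $ k)\<^sup>2)
      = (a - y $ i)\<^sup>2 + (\<Sum>k\<in>UNIV - {i}. (vec_upd v i a $ k - y $ k)\<^sup>2)"
    by (subst sum.remove[of UNIV i]) auto
  also have "(\<Sum>k\<in>UNIV - {i}. (vec_upd v i a $ k - y $ k)\<^sup>2) = (\<Sum>k\<in>UNIV - {i}. (v $ k - y $ k)\<^sup>2)"
    by (rule sum.cong) auto
  also have "(\<Sum>k\<in>UNIV - {i}. (v $ k - y $ k)\<^sup>2) = (\<Sum>k\<in>UNIV. (v $ k - y $ k)\<^sup>2) - (v $ i - y $ i)\<^sup>2"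
    by (subst sum.remove[of UNIV i]) auto
  finally show ?thesis unfolding norm_sq_eq_sum by simp
qed

lemma I1_vec_upd_subset: "I1 (vec_upd v i a) \<subseteq> insert i (I1 v)"
  by (auto simp: I1_def)

lemma proj_sparse_setD:
  assumes "x \<in> proj (sparse_set s) y"
  shows "l0norm x \<le> s" and "l0norm z \<le> s \<Longrightarrow> (norm (x - y))\<^sup>2 \<le> (norm (z - y))\<^sup>2"
  using assms by (auto simp: proj_def sparse_set_def)

lemma proj_sparse_set_on_support:
  fixes x y :: "real ^ 'n"
  assumes proj: "x \<in> proj (sparse_set s) y" and i: "i \<in> I1 x"
  shows "y $ i = x $ i"
proof -
  let ?z = "vec_upd x i (y $ i)"
  have "I1 ?z \<subseteq> I1 x" using i by (auto simp: I1_def)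
  then have "l0norm ?z \<le> s" using proj_sparse_setD(1)[OF proj] by (meson l0norm_mono order_trans)
  then have "(norm (x - y))\<^sup>2 \<le> (norm (?z - y))\<^sup>2" by (rule proj_sparse_setD(2)[OF proj])
  then have "(x $ i - y $ i)\<^sup>2 \<le> 0" by (simp add: norm_sq_vec_upd_diff)
  then show ?thesis by simp
qed

lemma proj_sparse_set_off_support:
  fixes x y :: "real ^ 'n"
  assumes s: "0 < s" "s \<le> CARD('n)"
    and proj: "x \<in> proj (sparse_set s) y" and i: "i \<in> I0 x"
  shows "\<bar>y $ i\<bar> \<le> Mlarg s x"
proof (cases "Mlarg s x = 0")
  case True
  let ?z = "vec_upd x i (y $ i)"
  have "card (insert i (I1 x)) \<le> s"
    using card_I1_lt_if_Mlarg_zero[OF s True] by (simp add: card_insert_if)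
  then have "l0norm ?z \<le> s"
    by (metis I1_vec_upd_subset card_mono finite l0norm_eq_card_I1 order_trans)
  then have "(norm (x - y))\<^sup>2 \<le> (norm (?z - y))\<^sup>2" by (rule proj_sparse_setD(2)[OF proj])
  then have "(y $ i)\<^sup>2 \<le> 0" using i by (simp add: norm_sq_vec_upd_diff I0_def)
  then show ?thesis using True by simp
next
  case False
  then have M_pos: "0 < Mlarg s x" using Mlarg_nonneg[OF s, of x] by simp
  obtain j where j: "Mlarg s x = \<bar>x $ j\<bar>" using Mlarg_attained[OF s] by blast
  have j_supp: "j \<in> I1 x" and ij: "i \<noteq> j" using M_pos j i by (auto simp: I1_def I0_def)
  let ?z = "vec_upd (vec_upd x j 0) i (y $ i)"
  have "I1 ?z \<subseteq> insert i (I1 x - {j})" by (auto simp: I1_def)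
  moreover have "card (insert i (I1 x - {j})) = card (I1 x)"
  proof -
    have "0 < card (I1 x)" using j_supp card_gt_0_iff by fastforce
    then show ?thesis using i j_supp by (simp add: I0_def I1_def)
  qed
  ultimately have "l0norm ?z \<le> l0norm x"
    by (metis card_mono finite l0norm_eq_card_I1)
  then have "l0norm ?z \<le> s" using proj_sparse_setD(1)[OF proj] by simp
  then have "(norm (x - y))\<^sup>2 \<le> (norm (?z - y))\<^sup>2" by (rule proj_sparse_setD(2)[OF proj])
  then have "(y $ i)\<^sup>2 \<le> (x $ j)\<^sup>2"
    using i ij proj_sparse_set_on_support[OF proj j_supp] by (simp add: norm_sq_vec_upd_diff I0_def)
  then show ?thesis using j by (simp add: abs_le_square_iff)
qed

lemma sum_le_sum_if_card_le_and_separated: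
  fixes f :: "'a \<Rightarrow> real"
  assumes "finite B" and "card A \<le> card B"
    and "\<And>a. a \<in> A \<Longrightarrow> f a \<le> c" and "\<And>b. b \<in> B \<Longrightarrow> c \<le> f b" and "0 \<le> c"
  shows "sum f A \<le> sum f B"
proof -
  have "sum f A \<le> of_nat (card A) * c"
    using assms(3) sum_bounded_above[of A f c] by simp
  also have "\<dots> \<le> of_nat (card B) * c" using assms(2,5) by (simp add: mult_right_mono)
  also have "\<dots> \<le> sum f B" using assms(4) sum_bounded_below[of B c f] by simp
  finally show ?thesis .
qed

lemma sum_sq_off_support_le_norm_sq:
  fixes y z :: "real ^ 'n"
  shows "(\<Sum>k\<in>I0 z. (y $ k)\<^sup>2) \<le> (norm (z - y))\<^sup>2"
proof -
  have "(\<Sum>k\<in>I0 z. (y $ k)\<^sup>2) = (\<Sum>k\<in>I0 z. (z $ k - y $ k)\<^sup>2)"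
    by (rule sum.cong) (auto simp: I0_def)
  also have "\<dots> \<le> (\<Sum>k\<in>UNIV. (z $ k - y $ k)\<^sup>2)" by (rule sum_mono2) auto
  finally show ?thesis by (simp add: norm_sq_eq_sum)
qed

lemma norm_sq_eq_sum_off_support:
  fixes x y :: "real ^ 'n"
  assumes "\<forall>i\<in>I1 x. y $ i = x $ i"
  shows "(norm (x - y))\<^sup>2 = (\<Sum>k\<in>I0 x. (y $ k)\<^sup>2)"
proof -
  have "(\<Sum>k\<in>UNIV. (x $ k - y $ k)\<^sup>2) = (\<Sum>k\<in>I0 x. (x $ k - y $ k)\<^sup>2)"
    using assms by (intro sum.mono_neutral_right) (auto simp: I0_def I1_def)
  also have "\<dots> = (\<Sum>k\<in>I0 x. (y $ k)\<^sup>2)" by (rule sum.cong) (auto simp: I0_def)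
  finally show ?thesis by (simp add: norm_sq_eq_sum)
qed

lemma in_proj_sparse_setI:
  fixes x y :: "real ^ 'n"
  assumes s: "0 < s" "s \<le> CARD('n)" and x_sparse: "l0norm x \<le> s"
    and on_supp: "\<forall>i\<in>I1 x. y $ i = x $ i" and off_supp: "\<forall>i\<in>I0 x. \<bar>y $ i\<bar> \<le> Mlarg s x"
  shows "x \<in> proj (sparse_set s) y"
proof -
  have "(norm (x - y))\<^sup>2 \<le> (norm (z - y))\<^sup>2" if z_sparse: "l0norm z \<le> s" for z
  proof -
    let ?q = "\<lambda>k. (y $ k)\<^sup>2"
    have split: "sum ?q (I0 v) = sum ?q (I0 w \<inter> I0 v) + sum ?q (I1 w \<inter> I0 v)"
      for v w :: "real ^ 'n"
    proof -
      have "I0 v = (I0 w \<inter> I0 v) \<union> (I1 w \<inter> I0 v)" by (auto simp: I0_def I1_def)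
      then show ?thesis by (metis (no_types) sum.union_disjoint finite disjoint_iff
          IntD1 I0_def I1_def mem_Collect_eq)
    qed
    have "sum ?q (I1 z \<inter> I0 x) \<le> sum ?q (I1 x \<inter> I0 z)"
    proof (cases "Mlarg s x = 0")
      case True
      then have "sum ?q (I1 z \<inter> I0 x) = 0" using off_supp by (intro sum.neutral) auto
      then show ?thesis by (simp add: sum_nonneg)
    next
      case False
      then have M_pos: "0 < Mlarg s x" using Mlarg_nonneg[OF s, of x] by simp
      note supp = I1_eq_Mlarg_superlevel[OF s x_sparse M_pos]
      have "card (I1 z \<inter> I0 x) \<le> card (I1 x \<inter> I0 z)"
      proof -
        have "card (I1 z) \<le> card (I1 x)" using z_sparse supp(2) by (simp add: l0norm_eq_card_I1)
        moreover have "I1 z \<inter> I0 x = I1 z - I1 z \<inter> I1 x" "I1 x \<inter> I0 z = I1 x - I1 z \<inter> I1 x"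
          by (auto simp: I0_def I1_def)
        ultimately show ?thesis by (simp add: card_Diff_subset Int_commute)
      qed
      moreover have "?q i \<le> (Mlarg s x)\<^sup>2" if "i \<in> I1 z \<inter> I0 x" for i
        using off_supp that power_mono[of "\<bar>y $ i\<bar>" "Mlarg s x" 2] by simp
      moreover have "(Mlarg s x)\<^sup>2 \<le> ?q i" if "i \<in> I1 x \<inter> I0 z" for i
        using on_supp that supp(1) M_pos power_mono[of "Mlarg s x" "\<bar>x $ i\<bar>" 2] by auto
      ultimately show ?thesis by (intro sum_le_sum_if_card_le_and_separated) auto
    qed
    then have "sum ?q (I0 x) \<le> sum ?q (I0 z)"
      using split[of x z] split[of z x] by (simp add: Int_commute)
    then show ?thesis
      using norm_sq_eq_sum_off_support[OF on_supp] sum_sq_off_support_le_norm_sq[of y z] by simp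
  qed
  then show ?thesis using x_sparse by (simp add: proj_def sparse_set_def)
qed

lemma proj_sparse_set_iff:
  fixes x y :: "real ^ 'n"
  assumes "0 < s" and "s \<le> CARD('n)" and "x \<in> sparse_set s"
  shows "x \<in> proj (sparse_set s) y \<longleftrightarrow>
    (\<forall>i\<in>I1 x. y $ i = x $ i) \<and> (\<forall>i\<in>I0 x. \<bar>y $ i\<bar> \<le> Mlarg s x)"
  using assms proj_sparse_set_on_support proj_sparse_set_off_support in_proj_sparse_setI
  by (metis mem_Collect_eq sparse_set_def)

theorem lemma2p2:
  fixes f :: "real ^ 'n \<Rightarrow> real"
    and grad :: "real ^ 'n \<Rightarrow> real ^ 'n"
    and s :: nat and L :: real and xs :: "real ^ 'n"
  assumes deriv: "\<And>x. (f has_derivative (\<lambda>h. grad x \<bullet> h)) (at x)"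
    and cont: "continuous_on UNIV grad"
    and s_pos: "0 < s" and s_lt: "s < CARD('n)"
    and L_pos: "L > 0"
  shows "(xs \<in> sparse_set s \<and> xs \<in> proj (sparse_set s) (xs - (1 / L) *\<^sub>R grad xs))
     \<longleftrightarrow> (l0norm xs \<le> s \<and>
          (\<forall>i \<in> I0 xs. \<bar>grad xs $ i\<bar> \<le> L * Mlarg s xs) \<and>
          (\<forall>i \<in> I1 xs. grad xs $ i = 0))"
proof -
  let ?y = "xs - (1 / L) *\<^sub>R grad xs"
  have on_supp: "?y $ i = xs $ i \<longleftrightarrow> grad xs $ i = 0" for i
    using L_pos by simp
  have off_supp: "\<bar>?y $ i\<bar> \<le> Mlarg s xs \<longleftrightarrow> \<bar>grad xs $ i\<bar> \<le> L * Mlarg s xs" if "i \<in> I0 xs" for i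
    using that L_pos by (simp add: I0_def abs_div pos_divide_le_eq mult.commute)
  have "xs \<in> sparse_set s \<longleftrightarrow> l0norm xs \<le> s" by (simp add: sparse_set_def)
  with proj_sparse_set_iff[OF s_pos less_imp_le[OF s_lt], of xs ?y] on_supp off_supp
  show ?thesis by blast
qed

end
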